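(* Let $G$ be a finite simple undirected graph, $T$ a spanning forest of $G$, and let $G'=G+e$ be obtained by inserting a new edge $e$ between two distinct non-adjacent vertices; let $T'=T$ if the endpoints of $e$ lie in the same tree of $T$, and $T'=T+e$ otherwise (so $T'$ is a spanning forest of $G'$). Let $(u,v)$ be an edge of $T$, and let $\mathrm{rep}(u,v)$ and $\mathrm{rep}'(u,v)$ denote the number of replacement edges of $(u,v)$ with respect to $(G,T)$ and $(G',T')$, respectively. Then $u$ and $v$ lie in different 2-edge-connected components of $G$ but in the same 2-edge-connected component of $G'$ if and only if $\mathrm{rep}(u,v)=0$ and $\mathrm{rep}'(u,v)=1$.
   Context: A spanning forest of a graph $H$ is an acyclic subgraph on all vertices of $H$ whose components have the same vertex sets as the components of $H$. Given $H$ and a spanning forest $F$, a replacement edge for an edge $f$ of $F$ is an edge $(x,y)\in E(H)\setminus E(F)$ with $x,y$ in the same tree of $F$ such that the unique path in $F$ between $x$ and $y$ contains $f$. Two vertices are 2-edge connected if there exist at least two edge-disjoint paths between them; the 2-edge-connected components are the equivalence classes of this relation. *)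

theory Defs
  imports Main
begin

definition simple_graph :: "'a set \<Rightarrow> 'a set set \<Rightarrow> bool" where
  "simple_graph V E \<longleftrightarrow> finite V \<and>
     (\<forall>e\<in>E. \<exists>x y. x \<noteq> y \<and> x \<in> V \<and> y \<in> V \<and> e = {x, y})"

definition is_path :: "'a set set \<Rightarrow> 'a \<Rightarrow> 'a \<Rightarrow> 'a list \<Rightarrow> bool" where
  "is_path F x y p \<longleftrightarrow> p \<noteq> [] \<and> hd p = x \<and> last p = y \<and> distinct p \<and>
     (\<forall>i. Suc i < length p \<longrightarrow> {p ! i, p ! Suc i} \<in> F)"

definition path_edges :: "'a list \<Rightarrow> 'a set set" where
  "path_edges p = {{p ! i, p ! Suc i} | i. Suc i < length p}"

definition connected_in :: "'a set set \<Rightarrow> 'a \<Rightarrow> 'a \<Rightarrow> bool" where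
  "connected_in F x y \<longleftrightarrow> (\<exists>p. is_path F x y p)"

definition is_cycle :: "'a set set \<Rightarrow> 'a list \<Rightarrow> bool" where
  "is_cycle F c \<longleftrightarrow> length c \<ge> 3 \<and> distinct c \<and>
     (\<forall>i. Suc i < length c \<longrightarrow> {c ! i, c ! Suc i} \<in> F) \<and> {last c, hd c} \<in> F"

definition acyclic_edges :: "'a set set \<Rightarrow> bool" where
  "acyclic_edges F \<longleftrightarrow> (\<nexists>c. is_cycle F c)"

definition spanning_forest :: "'a set \<Rightarrow> 'a set set \<Rightarrow> 'a set set \<Rightarrow> bool" where
  "spanning_forest V E F \<longleftrightarrow> F \<subseteq> E \<and> acyclic_edges F \<and>
     (\<forall>x\<in>V. \<forall>y\<in>V. connected_in F x y \<longleftrightarrow> connected_in E x y)"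

definition replacement_edge :: "'a set set \<Rightarrow> 'a set set \<Rightarrow> 'a set \<Rightarrow> 'a set \<Rightarrow> bool" where
  "replacement_edge E F f e \<longleftrightarrow> e \<in> E - F \<and>
     (\<exists>x y. e = {x, y} \<and> connected_in F x y \<and>
        (\<exists>p. is_path F x y p \<and> f \<in> path_edges p))"

definition rep :: "'a set set \<Rightarrow> 'a set set \<Rightarrow> 'a set \<Rightarrow> nat" where
  "rep E F f = card {e. replacement_edge E F f e}"

definition two_edge_connected :: "'a set set \<Rightarrow> 'a \<Rightarrow> 'a \<Rightarrow> bool" where
  "two_edge_connected E x y \<longleftrightarrow>
     (\<exists>p q. is_path E x y p \<and> is_path E x y q \<and> path_edges p \<inter> path_edges q = {})"

end

theory Submission
  imports Defs
begin

(* A tree edge uv of a forest T is a bridge of T. Its ends are 2-edge-connected in G iff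
   G - uv still connects them, and since T connects the ends of every edge of G, this happens
   iff some non-tree edge closes a tree path through uv, i.e. iff rep(uv) > 0: walk along a
   u-v path of G - uv until it first leaves the component of u in T - uv.
   Inserting ab creates no replacement edge other than ab itself. If ab joins two trees of T,
   the T'-path between the ends of an old edge cannot use ab, for otherwise a and b would
   already be connected in T; so the old edge has the same tree path as before. Hence
   rep(uv) = 0 forces rep'(uv) <= 1, and the equivalence follows. *)

lemma is_path_take:
  assumes "is_path F x y p" "k < length p"
  shows "is_path F x (p ! k) (take (Suc k) p)"
proof -
  have "last (take (Suc k) p) = p ! k"
    using assms(2) by (simp add: take_Suc_conv_app_nth)
  then show ?thesis
    using assms by (auto simp: is_path_def)
qed

lemma is_path_drop:
  assumes "is_path F x y p" "k < length p"
  shows "is_path F (p ! k) y (drop k p)"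
  using assms by (auto simp: is_path_def hd_drop_conv_nth)

lemma is_path_snoc:
  assumes "is_path F x y p" "z \<notin> set p" "{y, z} \<in> F"
  shows "is_path F x z (p @ [z])"
proof -
  have "p ! i = y" if "Suc i = length p" for i
    using assms(1) that unfolding is_path_def by (metis diff_Suc_1 last_conv_nth)
  then show ?thesis
    using assms by (auto simp: is_path_def nth_append less_Suc_eq)
qed

lemma connected_in_iff_rtranclp:
  "connected_in F x y \<longleftrightarrow> (\<lambda>x y. {x, y} \<in> F)\<^sup>*\<^sup>* x y"
proof
  assume "connected_in F x y"
  then obtain p where p: "is_path F x y p"
    by (auto simp: connected_in_def)
  have "(\<lambda>x y. {x, y} \<in> F)\<^sup>*\<^sup>* (p ! 0) (p ! k)" if "k < length p" for k
    using that p by (induction k) (auto simp: is_path_def intro: rtranclp.rtrancl_into_rtrancl)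
  from this[of "length p - 1"] p show "(\<lambda>x y. {x, y} \<in> F)\<^sup>*\<^sup>* x y"
    by (auto simp: is_path_def hd_conv_nth last_conv_nth)
next
  assume "(\<lambda>x y. {x, y} \<in> F)\<^sup>*\<^sup>* x y"
  then show "connected_in F x y"
    unfolding connected_in_def
  proof (induction rule: rtranclp_induct)
    case base
    have "is_path F x x [x]"
      by (simp add: is_path_def)
    then show ?case ..
  next
    case (step y z)
    then obtain p where p: "is_path F x y p"
      by blast
    show ?case
    proof (cases "z \<in> set p")
      case True
      then obtain k where "k < length p" "p ! k = z"
        by (auto simp: in_set_conv_nth)
      then have "is_path F x z (take (Suc k) p)"
        using is_path_take[OF p] by metis
      then show ?thesis ..
    next
      case False
      have "is_path F x z (p @ [z])"
        using p False step(2) by (rule is_path_snoc)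
      then show ?thesis ..
    qed
  qed
qed

lemma connected_in_refl: "connected_in F x x"
  by (simp add: connected_in_iff_rtranclp)

lemma connected_in_edge: "{x, y} \<in> F \<Longrightarrow> connected_in F x y"
  unfolding connected_in_iff_rtranclp by (rule r_into_rtranclp)

lemma connected_in_trans:
  "connected_in F x y \<Longrightarrow> connected_in F y z \<Longrightarrow> connected_in F x z"
  unfolding connected_in_iff_rtranclp by (rule rtranclp_trans)

lemma connected_in_sym: "connected_in F x y \<Longrightarrow> connected_in F y x"
  unfolding connected_in_iff_rtranclp
proof (induction rule: rtranclp_induct)
  case (step y z)
  from \<open>{y, z} \<in> F\<close> have "{z, y} \<in> F"
    by (simp add: insert_commute)
  then show ?case
    using step.IH by (rule converse_rtranclp_into_rtranclp)
qed simp

lemma connected_in_mono: "connected_in F x y \<Longrightarrow> F \<subseteq> G \<Longrightarrow> connected_in G x y"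
  unfolding connected_in_iff_rtranclp by (erule rtranclp_mono[THEN predicate2D, rotated]) blast

lemma connected_in_crossing_edge:
  assumes "connected_in F x y" "P x" "\<not> P y"
  obtains s t where "{s, t} \<in> F" "P s" "\<not> P t"
  using assms unfolding connected_in_iff_rtranclp
  by (induction rule: rtranclp_induct) auto

lemma path_edges_subset: "is_path F x y p \<Longrightarrow> path_edges p \<subseteq> F"
  by (auto simp: is_path_def path_edges_def)

lemma is_path_subset: "is_path F x y p \<Longrightarrow> path_edges p \<subseteq> G \<Longrightarrow> is_path G x y p"
  by (auto simp: is_path_def path_edges_def)

lemma path_edge_index_unique:
  assumes "distinct p" "Suc i < length p" "Suc j < length p"
    and "{p ! i, p ! Suc i} = {p ! j, p ! Suc j}"
  shows "i = j"
  using assms by (auto simp: doubleton_eq_iff nth_eq_iff_index_eq)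

lemma
  assumes p: "is_path F x y p" and j: "Suc j < length p"
  shows connected_in_path_prefix: "connected_in (F - {{p ! j, p ! Suc j}}) x (p ! j)"
    and connected_in_path_suffix: "connected_in (F - {{p ! j, p ! Suc j}}) (p ! Suc j) y"
proof -
  have "distinct p"
    using p by (simp add: is_path_def)
  then have other_edges: "{p ! i, p ! Suc i} \<noteq> {p ! j, p ! Suc j}"
    if "Suc i < length p" "i \<noteq> j" for i
    using path_edge_index_unique j that by blast
  have "is_path (F - {{p ! j, p ! Suc j}}) x (p ! j) (take (Suc j) p)"
    using is_path_take[OF p, of j] j other_edges by (auto simp: is_path_def)
  then show "connected_in (F - {{p ! j, p ! Suc j}}) x (p ! j)"
    by (auto simp: connected_in_def)
  have "is_path (F - {{p ! j, p ! Suc j}}) (p ! Suc j) y (drop (Suc j) p)"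
    using is_path_drop[OF p j] j other_edges by (auto simp: is_path_def)
  then show "connected_in (F - {{p ! j, p ! Suc j}}) (p ! Suc j) y"
    by (auto simp: connected_in_def)
qed

lemma connected_in_path_edge_ends:
  assumes p: "is_path F x y p" and st: "{s, t} \<in> path_edges p"
    and "F - {{s, t}} \<subseteq> G" "connected_in G x y"
  shows "connected_in G s t"
proof -
  obtain j where j: "Suc j < length p" and st_j: "{s, t} = {p ! j, p ! Suc j}"
    using st by (auto simp: path_edges_def)
  have "F - {{p ! j, p ! Suc j}} \<subseteq> G"
    using assms(3) by (simp only: st_j)
  then have "connected_in G x (p ! j)" "connected_in G (p ! Suc j) y"
    using connected_in_path_prefix[OF p j] connected_in_path_suffix[OF p j]
    by (simp_all add: connected_in_mono)
  with assms(4) have "connected_in G (p ! j) (p ! Suc j)"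
    using connected_in_sym connected_in_trans by metis
  moreover have "(s = p ! j \<and> t = p ! Suc j) \<or> (s = p ! Suc j \<and> t = p ! j)"
    using st_j by (simp add: doubleton_eq_iff)
  ultimately show ?thesis
    using connected_in_sym by metis
qed

definition is_bridge :: "'a set set \<Rightarrow> 'a \<Rightarrow> 'a \<Rightarrow> bool" where
  "is_bridge F u v \<longleftrightarrow> {u, v} \<in> F \<and> \<not> connected_in (F - {{u, v}}) u v"

lemma is_bridge_if_acyclic:
  assumes "acyclic_edges F" "{u, v} \<in> F" "u \<noteq> v"
  shows "is_bridge F u v"
proof -
  have False if p: "is_path (F - {{u, v}}) u v p" for p
  proof -
    have ends: "hd p = u" "last p = v" "p \<noteq> []"
      using p by (auto simp: is_path_def)
    have "length p \<noteq> 1"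
      using ends assms(3) by (auto simp: length_Suc_conv)
    moreover have "length p \<noteq> 2"
    proof
      assume "length p = 2"
      then have "{p ! 0, p ! 1} \<in> F - {{u, v}}" "p ! 0 = u" "p ! 1 = v"
        using p ends by (auto simp: is_path_def hd_conv_nth last_conv_nth)
      then show False
        by simp
    qed
    moreover have "length p \<noteq> 0"
      using ends by simp
    ultimately have "length p \<ge> 3"
      by linarith
    then have "is_cycle F p"
      using p ends assms(2) by (auto simp: is_cycle_def is_path_def insert_commute)
    then show False
      using assms(1) by (auto simp: acyclic_edges_def)
  qed
  then show ?thesis
    using assms(2) by (auto simp: is_bridge_def connected_in_def)
qed

lemma is_bridge_insert:
  assumes bridge: "is_bridge T u v" and "\<not> connected_in T a b"
  shows "is_bridge (insert {a, b} T) u v"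
proof -
  have False if p: "is_path (insert {a, b} T - {{u, v}}) u v p" for p
  proof (cases "{a, b} \<in> path_edges p")
    case True
    have "connected_in T u v"
      using bridge by (simp add: is_bridge_def connected_in_edge)
    then have "connected_in T a b"
      using connected_in_path_edge_ends[OF p True] by auto
    then show False
      using assms(2) by blast
  next
    case False
    then have "is_path (T - {{u, v}}) u v p"
      using p path_edges_subset[OF p] by (auto intro: is_path_subset)
    then show False
      using bridge by (auto simp: is_bridge_def connected_in_def)
  qed
  then show ?thesis
    using bridge by (auto simp: is_bridge_def connected_in_def)
qed

lemma path_edges_pair: "path_edges [u, v] = {{u, v}}"
  by (auto simp: path_edges_def less_Suc_eq)

lemma two_edge_connected_iff_connected_without_edge:
  assumes "{u, v} \<in> E" "u \<noteq> v"
  shows "two_edge_connected E u v \<longleftrightarrow> connected_in (E - {{u, v}}) u v"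
proof
  assume "two_edge_connected E u v"
  then obtain p q where "is_path E u v p" "is_path E u v q"
    and "path_edges p \<inter> path_edges q = {}"
    by (auto simp: two_edge_connected_def)
  then obtain r where r: "is_path E u v r" "{u, v} \<notin> path_edges r"
    by blast
  have "is_path (E - {{u, v}}) u v r"
    using r path_edges_subset[OF r(1)] by (auto intro: is_path_subset[OF r(1)])
  then show "connected_in (E - {{u, v}}) u v"
    by (auto simp: connected_in_def)
next
  assume "connected_in (E - {{u, v}}) u v"
  then obtain q where q: "is_path (E - {{u, v}}) u v q"
    by (auto simp: connected_in_def)
  have "is_path E u v [u, v]"
    using assms by (simp add: is_path_def less_Suc_eq)
  moreover have "is_path E u v q"
    using path_edges_subset[OF q] by (auto intro: is_path_subset[OF q])
  moreover have "path_edges [u, v] \<inter> path_edges q = {}"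
    using path_edges_subset[OF q] by (auto simp: path_edges_pair)
  ultimately show "two_edge_connected E u v"
    by (auto simp: two_edge_connected_def)
qed

lemma connected_without_tree_edge_iff_replacement_edge:
  assumes "T \<subseteq> E" and spans: "\<And>x y. {x, y} \<in> E \<Longrightarrow> connected_in T x y"
    and bridge: "is_bridge T u v"
  shows "connected_in (E - {{u, v}}) u v \<longleftrightarrow> (\<exists>e. replacement_edge E T {u, v} e)"
proof
  define S where "S z \<longleftrightarrow> connected_in (T - {{u, v}}) u z" for z
  assume "connected_in (E - {{u, v}}) u v"
  moreover have "S u" "\<not> S v"
    using bridge by (simp_all add: S_def connected_in_refl is_bridge_def)
  ultimately obtain s t where st: "{s, t} \<in> E - {{u, v}}" "S s" "\<not> S t"
    by (rule connected_in_crossing_edge)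
  have "{s, t} \<notin> T"
  proof
    assume "{s, t} \<in> T"
    then have "connected_in (T - {{u, v}}) s t"
      using st by (simp add: connected_in_edge)
    then have "S t"
      using \<open>S s\<close> unfolding S_def by (rule connected_in_trans[rotated])
    with st show False by simp
  qed
  obtain p where p: "is_path T s t p"
    using spans[of s t] st by (auto simp: connected_in_def)
  have "{u, v} \<in> path_edges p"
  proof (rule ccontr)
    assume "{u, v} \<notin> path_edges p"
    then have "is_path (T - {{u, v}}) s t p"
      using path_edges_subset[OF p] by (auto intro: is_path_subset[OF p])
    then have "connected_in (T - {{u, v}}) s t"
      by (auto simp: connected_in_def)
    then have "S t"
      using \<open>S s\<close> unfolding S_def by (rule connected_in_trans[rotated])
    with st show False by simp
  qed
  then have "replacement_edge E T {u, v} {s, t}"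
    using st \<open>{s, t} \<notin> T\<close> p by (auto simp: replacement_edge_def connected_in_def)
  then show "\<exists>e. replacement_edge E T {u, v} e" ..
next
  assume "\<exists>e. replacement_edge E T {u, v} e"
  then obtain x y p where xy: "{x, y} \<in> E - T" and p: "is_path T x y p"
    and uv: "{u, v} \<in> path_edges p"
    by (auto simp: replacement_edge_def)
  have "{x, y} \<noteq> {u, v}"
    using xy bridge by (auto simp: is_bridge_def)
  then have "connected_in (E - {{u, v}}) x y"
    using xy by (simp add: connected_in_edge)
  moreover have "T - {{u, v}} \<subseteq> E - {{u, v}}"
    using assms(1) by blast
  ultimately show "connected_in (E - {{u, v}}) u v"
    by (rule connected_in_path_edge_ends[OF p uv, rotated])
qed

lemma two_edge_connected_iff_replacement_edge:
  assumes "T \<subseteq> E" "\<And>x y. {x, y} \<in> E \<Longrightarrow> connected_in T x y" "is_bridge T u v"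
  shows "two_edge_connected E u v \<longleftrightarrow> (\<exists>e. replacement_edge E T {u, v} e)"
proof -
  have "u \<noteq> v"
    using assms(3) by (auto simp: is_bridge_def connected_in_refl)
  moreover have "{u, v} \<in> E"
    using assms(1,3) by (auto simp: is_bridge_def)
  ultimately show ?thesis
    using assms by (simp add: two_edge_connected_iff_connected_without_edge
        connected_without_tree_edge_iff_replacement_edge)
qed

lemma replacement_edges_after_insert:
  fixes E T :: "'a set set" and a b :: 'a
  defines "T' \<equiv> if connected_in T a b then T else insert {a, b} T"
  assumes spans: "\<And>x y. {x, y} \<in> E \<Longrightarrow> connected_in T x y"
    and none: "\<nexists>e. replacement_edge E T f e"
  shows "{e. replacement_edge (insert {a, b} E) T' f e} \<subseteq> {{a, b}}"
proof
  fix e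
  assume "e \<in> {e. replacement_edge (insert {a, b} E) T' f e}"
  then obtain x y p where e: "e = {x, y}" "e \<in> insert {a, b} E - T'"
    and p: "is_path T' x y p" and f: "f \<in> path_edges p"
    by (auto simp: replacement_edge_def)
  show "e \<in> {{a, b}}"
  proof (rule ccontr)
    assume "e \<notin> {{a, b}}"
    then have eE: "e \<in> E - T"
      using e by (auto simp: T'_def split: if_splits)
    have "is_path T x y p"
    proof (cases "connected_in T a b")
      case True
      then show ?thesis
        using p by (simp add: T'_def)
    next
      case False
      then have p': "is_path (insert {a, b} T) x y p"
        using p by (simp add: T'_def)
      have "{a, b} \<notin> path_edges p"
        using False connected_in_path_edge_ends[OF p', of a b T] spans eE e(1) by auto
      then show ?thesis
        using path_edges_subset[OF p'] by (auto intro: is_path_subset[OF p'])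
    qed
    then have "replacement_edge E T f e"
      using eE e(1) f by (auto simp: replacement_edge_def connected_in_def)
    with none show False
      by blast
  qed
qed

lemma simple_graph_edge:
  "simple_graph V E \<Longrightarrow> {x, y} \<in> E \<Longrightarrow> x \<in> V \<and> y \<in> V \<and> x \<noteq> y"
  unfolding simple_graph_def by (fastforce simp: doubleton_eq_iff)

lemma simple_graph_finite_edges:
  assumes "simple_graph V E"
  shows "finite E"
proof (rule finite_subset)
  show "E \<subseteq> Pow V"
    using assms by (auto simp: simple_graph_def)
  show "finite (Pow V)"
    using assms by (simp add: simple_graph_def)
qed

lemma finite_replacement_edges: "finite E \<Longrightarrow> finite {e. replacement_edge E T f e}"
  by (rule finite_subset[rotated]) (auto simp: replacement_edge_def)

lemma spanning_forest_connects_edge: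
  assumes "simple_graph V E" "spanning_forest V E T" "{x, y} \<in> E"
  shows "connected_in T x y"
  using assms simple_graph_edge[OF assms(1,3)] connected_in_edge[OF assms(3)]
  by (auto simp: spanning_forest_def)

theorem lemma15:
  fixes V :: "'a set" and E T :: "'a set set" and a b u v :: 'a
  assumes "simple_graph V E"
    and "spanning_forest V E T"
    and "a \<in> V" "b \<in> V" "a \<noteq> b" "{a, b} \<notin> E"
    and "{u, v} \<in> T"
  shows "(\<not> two_edge_connected E u v \<and> two_edge_connected (insert {a, b} E) u v)
     \<longleftrightarrow> (rep E T {u, v} = 0 \<and>
          rep (insert {a, b} E) (if connected_in T a b then T else insert {a, b} T) {u, v} = 1)"
proof -
  define E' where "E' = insert {a, b} E"
  define T' where "T' = (if connected_in T a b then T else insert {a, b} T)"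
  define R where "R = {e. replacement_edge E T {u, v} e}"
  define R' where "R' = {e. replacement_edge E' T' {u, v} e}"
  have forest: "T \<subseteq> E" "acyclic_edges T"
    using assms(2) by (auto simp: spanning_forest_def)
  have spans: "\<And>x y. {x, y} \<in> E \<Longrightarrow> connected_in T x y"
    using assms(1,2) by (rule spanning_forest_connects_edge)
  have spans': "\<And>x y. {x, y} \<in> E' \<Longrightarrow> connected_in T' x y"
    using spans by (auto simp: E'_def T'_def doubleton_eq_iff connected_in_edge
        intro: connected_in_sym connected_in_mono)
  have bridge: "is_bridge T u v"
    using simple_graph_edge[OF assms(1)] forest assms(7) by (blast intro: is_bridge_if_acyclic)
  then have bridge': "is_bridge T' u v"
    by (simp add: T'_def is_bridge_insert)
  have "T' \<subseteq> E'"
    using forest by (auto simp: T'_def E'_def)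
  then have "two_edge_connected E' u v \<longleftrightarrow> R' \<noteq> {}"
    using spans' bridge' by (simp add: R'_def two_edge_connected_iff_replacement_edge)
  moreover have "two_edge_connected E u v \<longleftrightarrow> R \<noteq> {}"
    using forest spans bridge by (simp add: R_def two_edge_connected_iff_replacement_edge)
  moreover have "finite R"
    unfolding R_def by (rule finite_replacement_edges[OF simple_graph_finite_edges[OF assms(1)]])
  moreover have "R = {} \<Longrightarrow> R' \<subseteq> {{a, b}}"
    using spans unfolding R_def R'_def E'_def T'_def by (rule replacement_edges_after_insert) auto
  ultimately show ?thesis
    unfolding rep_def R_def[symmetric] E'_def[symmetric] T'_def[symmetric] R'_def[symmetric]
    by (auto simp: subset_singleton_iff)
qed

end
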